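(* For $M=2$ there exist unitary operators $S,T$ on $\mathcal{H}_2\otimes\mathcal{H}_2$ such that $S\bar{Q}_fT=U_f$ for both permutations $f$ of $\mathbb{Z}_2$. For every integer $M\ge3$ there do not exist unitary operators $S,T$ on $\mathcal{H}_M\otimes\mathcal{H}_M$ such that $S\bar{Q}_fT=U_f$ for every permutation $f$ of $\mathbb{Z}_M$.
   Context: $\mathcal{H}_M$ is an $M$-dimensional Hilbert space with orthonormal basis $\{|x\rangle\}_{x\in\mathbb{Z}_M}$. For a permutation $f$ of $\mathbb{Z}_M$: the standard oracle operator is $U_f$ on $\mathcal{H}_M\otimes\mathcal{H}_M$ with $U_f|x\rangle\otimes|y\rangle=|x\rangle\otimes|y\oplus f(x)\rangle$ ($\oplus$ addition mod $M$); the minimal oracle operator is $Q_f$ on $\mathcal{H}_M$ with $Q_f|x\rangle=|f(x)\rangle$; the entanglement-assisted minimal oracle operator is $\bar{Q}_f=Q_f\otimes\mathbb{1}_M$. *)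

theory Defs
  imports "Jordan_Normal_Form.Schur_Decomposition" "HOL-Combinatorics.Permutations"
begin

text \<open>Operators on H_M (x) H_M are represented as complex (M*M) x (M*M) matrices
  w.r.t. the product basis |x> (x) |y>, which is given index x*M + y (x, y < M).
  Column j of a matrix is the image of the j-th basis vector.\<close>

definition unitary_mat :: "nat \<Rightarrow> complex mat \<Rightarrow> bool" where
  "unitary_mat n U \<longleftrightarrow> U \<in> carrier_mat n n \<and>
     U * mat_adjoint U = 1\<^sub>m n \<and> mat_adjoint U * U = 1\<^sub>m n"

text \<open>Standard oracle: U_f |x> (x) |y> = |x> (x) |y + f x mod M>.\<close>
definition std_oracle :: "nat \<Rightarrow> (nat \<Rightarrow> nat) \<Rightarrow> complex mat" where
  "std_oracle M f = mat (M*M) (M*M) (\<lambda>(i,j).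
     if i = (j div M) * M + ((j mod M + f (j div M)) mod M) then 1 else 0)"

text \<open>Entanglement-assisted minimal oracle: (Q_f (x) 1) |x> (x) |y> = |f x> (x) |y>.\<close>
definition ea_min_oracle :: "nat \<Rightarrow> (nat \<Rightarrow> nat) \<Rightarrow> complex mat" where
  "ea_min_oracle M f = mat (M*M) (M*M) (\<lambda>(i,j).
     if i = f (j div M) * M + j mod M then 1 else 0)"

end

theory Submission
  imports Defs "HOL-Number_Theory.Cong"
begin

(* All operators involved are permutation matrices, so every identity reduces to one between
   index maps on x * M + y.

   For M = 2 every permutation of Z_2 is a translation x |-> x + c. Conjugating Q_f (x) 1 by the
   swap of the tensor factors gives 1 (x) Q_f, and for a translation (1 (x) Q_f) U_id = U_f; so
   S = SWAP and T = SWAP U_id work for both permutations.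

   Conversely, S (Q_f (x) 1) T = U_f for all f gives U_f U_id^* = S (Q_f (x) 1) S^*, which is an
   involution whenever f is. For M >= 3 and f the transposition (0 1) it is not:
   U_f U_id^* U_f maps |0,0> to |0,2>, whereas U_id fixes |0,0>. *)

definition perm_mat :: "nat \<Rightarrow> (nat \<Rightarrow> nat) \<Rightarrow> 'a :: {zero, one} mat" where
  "perm_mat n p = mat n n (\<lambda>(i, j). if i = p j then 1 else 0)"

lemma dim_perm_mat [simp]: "dim_row (perm_mat n p) = n" "dim_col (perm_mat n p) = n"
  by (simp_all add: perm_mat_def)

lemma perm_mat_carrier [simp]: "perm_mat n p \<in> carrier_mat n n"
  by (simp add: carrier_matI)

lemma index_perm_mat [simp]:
  "i < n \<Longrightarrow> j < n \<Longrightarrow> perm_mat n p $$ (i, j) = (if i = p j then 1 else 0)"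
  by (simp add: perm_mat_def)

lemma perm_mat_cong: "(\<And>j. j < n \<Longrightarrow> p j = q j) \<Longrightarrow> perm_mat n p = perm_mat n q"
  by (rule eq_matI) auto

lemma perm_mat_id: "perm_mat n id = 1\<^sub>m n"
  by (rule eq_matI) auto

lemma perm_mat_eqD:
  assumes "perm_mat n p = (perm_mat n q :: 'a :: zero_neq_one mat)" and "j < n" and "p j < n"
  shows "p j = q j"
proof -
  have "(perm_mat n p :: 'a mat) $$ (p j, j) = 1" using assms(2,3) by simp
  then show ?thesis using assms by (auto split: if_splits)
qed

lemma perm_mat_mult:
  assumes "\<And>j. j < n \<Longrightarrow> q j < n"
  shows "perm_mat n p * perm_mat n q = (perm_mat n (p \<circ> q) :: 'a :: semiring_1 mat)"
proof (rule eq_matI)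
  fix i j assume i: "i < dim_row (perm_mat n (p \<circ> q) :: 'a mat)"
    and j: "j < dim_col (perm_mat n (p \<circ> q) :: 'a mat)"
  then have "(perm_mat n p * perm_mat n q :: 'a mat) $$ (i, j)
      = (\<Sum>k\<in>{0..<n}. (if i = p k then 1 else 0) * (if k = q j then 1 else 0))"
    by (simp add: scalar_prod_def)
  also have "\<dots> = (\<Sum>k\<in>{0..<n}. if k = q j then (if i = p k then 1 else 0) else 0)"
    by (rule sum.cong) auto
  also have "\<dots> = (if i = p (q j) then 1 else 0)"
    using assms[of j] j by simp
  finally show "(perm_mat n p * perm_mat n q :: 'a mat) $$ (i, j) = perm_mat n (p \<circ> q) $$ (i, j)"
    using i j by simp
qed auto

lemma mat_adjoint_perm_mat:
  assumes "bij_betw p {..<n} {..<n}"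
  shows "mat_adjoint (perm_mat n p :: complex mat) = perm_mat n (inv_into {..<n} p)"
proof (rule eq_matI)
  fix i j assume "i < dim_row (perm_mat n (inv_into {..<n} p) :: complex mat)"
    and "j < dim_col (perm_mat n (inv_into {..<n} p) :: complex mat)"
  then have ij: "i < n" "j < n" by auto
  have "j = p i \<longleftrightarrow> i = inv_into {..<n} p j"
    using assms ij by (auto simp: bij_betw_def bij_betw_inv_into_right)
  then show "mat_adjoint (perm_mat n p :: complex mat) $$ (i, j) = perm_mat n (inv_into {..<n} p) $$ (i, j)"
    using ij by (simp add: mat_adjoint_def mat_of_rows_def)
qed (simp_all add: mat_adjoint_def)

lemma unitary_perm_mat:
  assumes p: "bij_betw p {..<n} {..<n}"
  shows "unitary_mat n (perm_mat n p)"
proof -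
  have into: "p j < n" "inv_into {..<n} p j < n" if "j < n" for j
    using that bij_betwE[OF p] bij_betwE[OF bij_betw_inv_into[OF p]] by auto
  have "perm_mat n p * mat_adjoint (perm_mat n p) = (perm_mat n (p \<circ> inv_into {..<n} p) :: complex mat)"
    by (simp add: mat_adjoint_perm_mat[OF p] perm_mat_mult into)
  also have "\<dots> = 1\<^sub>m n"
    using p by (simp add: perm_mat_cong[of n _ id] perm_mat_id bij_betw_inv_into_right)
  finally have right: "perm_mat n p * mat_adjoint (perm_mat n p) = (1\<^sub>m n :: complex mat)" .
  have "mat_adjoint (perm_mat n p) * perm_mat n p = (perm_mat n (inv_into {..<n} p \<circ> p) :: complex mat)"
    by (simp add: mat_adjoint_perm_mat[OF p] perm_mat_mult into)
  also have "\<dots> = 1\<^sub>m n"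
    using p by (simp add: perm_mat_cong[of n _ id] perm_mat_id bij_betw_inv_into_left)
  finally show ?thesis using right by (simp add: unitary_mat_def)
qed

lemma mat_adjoint_carrier: "A \<in> carrier_mat n m \<Longrightarrow> mat_adjoint A \<in> carrier_mat m n"
  by (auto simp: mat_adjoint_def)

lemma unitary_equivalence_involution:
  assumes S: "unitary_mat n S" and D: "unitary_mat n D"
    and A: "A \<in> carrier_mat n n" "A * A = 1\<^sub>m n" and T: "T \<in> carrier_mat n n"
    and ST: "S * T = D" and SAT: "S * A * T = B"
  shows "B * mat_adjoint D * B = D"
proof -
  let ?S' = "mat_adjoint S" and ?D' = "mat_adjoint D"
  have carrier: "S \<in> carrier_mat n n" "?S' \<in> carrier_mat n n" "D \<in> carrier_mat n n" "?D' \<in> carrier_mat n n"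
    using S D by (auto simp: unitary_mat_def mat_adjoint_carrier)
  note assoc = assoc_mult_mat[of _ n n _ n _ n]
  have unit: "?S' * S = 1\<^sub>m n" "S * ?S' = 1\<^sub>m n" "D * ?D' = 1\<^sub>m n"
    using S D by (simp_all add: unitary_mat_def)
  define C where "C = S * A * ?S'"
  have C: "C \<in> carrier_mat n n" using carrier A by (simp add: C_def assoc)
  have "T = ?S' * S * T" using carrier T by (simp add: unit assoc)
  then have "T = ?S' * D" using carrier T ST by (simp add: assoc)
  then have "B = S * A * (?S' * D)" using SAT by simp
  then have B: "B = C * D" using carrier A by (simp add: C_def assoc)
  have "C * C = S * (A * (?S' * S) * A) * ?S'" using carrier A by (simp add: C_def assoc)
  then have CC: "C * C = 1\<^sub>m n" using carrier A by (simp add: unit assoc)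
  have "B * ?D' * B = C * (D * ?D') * C * D" using carrier C by (simp add: B assoc)
  also have "\<dots> = D" using carrier C by (simp add: unit CC assoc)
  finally show ?thesis .
qed

lemma square_index_less:
  assumes "x < M" "y < (M :: nat)"
  shows "x * M + y < M * M"
proof -
  have "x * M + y < Suc x * M" using assms(2) by simp
  also have "\<dots> \<le> M * M" using assms(1) by (intro mult_le_mono1) simp
  finally show ?thesis .
qed

lemma square_index_eq_iff:
  assumes "y < M" "y' < (M :: nat)"
  shows "x * M + y = x' * M + y' \<longleftrightarrow> x = x' \<and> y = y'"
proof
  assume eq: "x * M + y = x' * M + y'"
  have "(x * M + y) div M = x" "(x' * M + y') div M = x'" using assms by simp_all
  then show "x = x' \<and> y = y'" using eq by simp
qed simp

lemma square_index_cases: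
  assumes "j < M * (M :: nat)"
  obtains x y where "x < M" "y < M" "j = x * M + y"
proof
  have "0 < M" using assms by (cases M) auto
  then show "j div M < M" "j mod M < M" "j = j div M * M + j mod M"
    using assms by (simp_all add: less_mult_imp_div_less)
qed

definition swap_index :: "nat \<Rightarrow> nat \<Rightarrow> nat" where
  "swap_index M j = (j mod M) * M + j div M"

definition std_index :: "nat \<Rightarrow> (nat \<Rightarrow> nat) \<Rightarrow> nat \<Rightarrow> nat" where
  "std_index M f j = (j div M) * M + (j mod M + f (j div M)) mod M"

definition ea_index :: "nat \<Rightarrow> (nat \<Rightarrow> nat) \<Rightarrow> nat \<Rightarrow> nat" where
  "ea_index M f j = f (j div M) * M + j mod M"

lemma std_oracle_eq_perm_mat: "std_oracle M f = perm_mat (M * M) (std_index M f)"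
  by (simp add: std_oracle_def perm_mat_def std_index_def)

lemma ea_min_oracle_eq_perm_mat: "ea_min_oracle M f = perm_mat (M * M) (ea_index M f)"
  by (simp add: ea_min_oracle_def perm_mat_def ea_index_def)

lemma swap_index_square_index [simp]: "y < M \<Longrightarrow> swap_index M (x * M + y) = y * M + x"
  by (simp add: swap_index_def)

lemma std_index_square_index [simp]:
  "y < M \<Longrightarrow> std_index M f (x * M + y) = x * M + (y + f x) mod M"
  by (simp add: std_index_def)

lemma ea_index_square_index [simp]: "y < M \<Longrightarrow> ea_index M f (x * M + y) = f x * M + y"
  by (simp add: ea_index_def)

lemma swap_index_less: "j < M * M \<Longrightarrow> swap_index M j < M * M"
  by (elim square_index_cases) (simp add: square_index_less)

lemma std_index_less: "j < M * M \<Longrightarrow> std_index M f j < M * M"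
  by (elim square_index_cases) (simp add: square_index_less)

lemma ea_index_less: "(\<And>x. x < M \<Longrightarrow> f x < M) \<Longrightarrow> j < M * M \<Longrightarrow> ea_index M f j < M * M"
  by (elim square_index_cases) (simp add: square_index_less)

lemma swap_index_swap_index: "j < M * M \<Longrightarrow> swap_index M (swap_index M j) = j"
  by (elim square_index_cases) simp

lemma bij_swap_index: "bij_betw (swap_index M) {..<M * M} {..<M * M}"
  by (rule bij_betw_byWitness[where f' = "swap_index M"])
    (auto simp: swap_index_swap_index swap_index_less)

lemma bij_std_index: "bij_betw (std_index M f) {..<M * M} {..<M * M}"
proof -
  have "j = k" if j: "j < M * M" and k: "k < M * M" and eq: "std_index M f j = std_index M f k"
    for j k
  proof -
    obtain x y where x: "x < M" "y < M" "j = x * M + y" using j by (rule square_index_cases)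
    obtain x' y' where x': "x' < M" "y' < M" "k = x' * M + y'" using k by (rule square_index_cases)
    have "x = x'" and "(y + f x) mod M = (y' + f x) mod M"
      using eq x x' by (auto simp: square_index_eq_iff)
    then have "y = y'"
      using x x' cong_add_rcancel_nat[of y "f x" y' M] by (simp add: cong_def)
    then show ?thesis using x x' \<open>x = x'\<close> by simp
  qed
  then have "inj_on (std_index M f) {..<M * M}"
    by (auto intro: inj_onI)
  moreover have "std_index M f ` {..<M * M} \<subseteq> {..<M * M}"
    by (auto simp: std_index_less)
  ultimately show ?thesis
    by (simp add: bij_betw_def endo_inj_surj)
qed

lemma unitary_std_oracle: "unitary_mat (M * M) (std_oracle M f)"
  by (simp add: std_oracle_eq_perm_mat unitary_perm_mat bij_std_index)

lemma ea_min_oracle_id: "ea_min_oracle M id = 1\<^sub>m (M * M)"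
proof -
  have "ea_index M id = id" by (rule ext) (simp add: ea_index_def)
  then show ?thesis by (simp add: ea_min_oracle_eq_perm_mat perm_mat_id)
qed

lemma ea_min_oracle_involution:
  assumes into: "\<And>x. x < M \<Longrightarrow> f x < M" and invol: "\<And>x. x < M \<Longrightarrow> f (f x) = x"
  shows "ea_min_oracle M f * ea_min_oracle M f = 1\<^sub>m (M * M)"
proof -
  have "ea_min_oracle M f * ea_min_oracle M f = perm_mat (M * M) (ea_index M f \<circ> ea_index M f)"
    by (simp add: ea_min_oracle_eq_perm_mat perm_mat_mult ea_index_less into)
  also have "\<dots> = perm_mat (M * M) id"
    by (rule perm_mat_cong) (auto elim: square_index_cases simp: invol)
  finally show ?thesis by (simp add: perm_mat_id)
qed

lemma std_oracle_translation_via_swap: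
  assumes f: "\<And>x. x < M \<Longrightarrow> f x = (x + c) mod M"
  shows "perm_mat (M * M) (swap_index M) * ea_min_oracle M f
           * perm_mat (M * M) (swap_index M \<circ> std_index M id) = std_oracle M f"
proof -
  have into: "f x < M" if "x < M" for x
    using that f[OF that] by simp
  have "perm_mat (M * M) (swap_index M) * ea_min_oracle M f
          * perm_mat (M * M) (swap_index M \<circ> std_index M id)
      = perm_mat (M * M) (swap_index M \<circ> ea_index M f \<circ> (swap_index M \<circ> std_index M id))"
    by (simp add: ea_min_oracle_eq_perm_mat perm_mat_mult ea_index_less into swap_index_less
        std_index_less)
  also have "\<dots> = perm_mat (M * M) (std_index M f)"
  proof (rule perm_mat_cong)
    fix j assume "j < M * M"
    then obtain x y where xy: "x < M" "y < M" "j = x * M + y" by (rule square_index_cases)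
    then have "f ((y + x) mod M) = (y + f x) mod M"
      using f by (simp add: mod_add_left_eq mod_add_right_eq add.assoc)
    then show "(swap_index M \<circ> ea_index M f \<circ> (swap_index M \<circ> std_index M id)) j = std_index M f j"
      using xy by simp
  qed
  finally show ?thesis by (simp add: std_oracle_eq_perm_mat)
qed

lemma permutes_two_translation:
  assumes "f permutes {..<2 :: nat}" and "x < 2"
  shows "f x = (x + f 0) mod 2"
proof -
  have "f 0 < 2" "f 1 < 2" using permutes_in_image[OF assms(1)] by auto
  moreover have "f 0 \<noteq> f 1" using permutes_inj[OF assms(1)] by (metis injD zero_neq_one)
  ultimately show ?thesis using assms(2) by (auto simp: less_2_cases_iff)
qed

lemma std_oracle_transpose_adjoint_ne:
  assumes "M \<ge> 3"
  shows "std_oracle M (transpose 0 1) * mat_adjoint (std_oracle M id) * std_oracle M (transpose 0 1)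
           \<noteq> std_oracle M id"
proof
  let ?n = "M * M" and ?p = "std_index M (transpose 0 1)" and ?q = "std_index M id"
  let ?q' = "inv_into {..<?n} ?q"
  have q: "bij_betw ?q {..<?n} {..<?n}" by (rule bij_std_index)
  have q'_less: "?q' j < ?n" if "j < ?n" for j
    using bij_betwE[OF bij_betw_inv_into[OF q]] that by auto
  have n: "2 < ?n" using assms less_le_trans[OF _ mult_le_mono[OF assms assms]] by simp
  have "?p 0 = 1" "?p 1 = 2" "?q 0 = 0" "?q 1 = 1"
    using assms by (simp_all add: std_index_def)
  moreover have "?q' 1 = 1"
    using bij_betw_imp_inj_on[OF q] n \<open>?q 1 = 1\<close> by (simp add: inv_into_f_eq)
  ultimately have "(?p \<circ> ?q' \<circ> ?p) 0 = 2" and "?q 0 = 0" by simp_all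
  assume "std_oracle M (transpose 0 1) * mat_adjoint (std_oracle M id) * std_oracle M (transpose 0 1)
           = std_oracle M id"
  then have "perm_mat ?n (?p \<circ> ?q' \<circ> ?p) = (perm_mat ?n ?q :: complex mat)"
    by (simp add: std_oracle_eq_perm_mat mat_adjoint_perm_mat[OF q] perm_mat_mult std_index_less
        q'_less)
  then have "(?p \<circ> ?q' \<circ> ?p) 0 = ?q 0"
    by (rule perm_mat_eqD) (use assms n \<open>(?p \<circ> ?q' \<circ> ?p) 0 = 2\<close> in simp_all)
  with \<open>(?p \<circ> ?q' \<circ> ?p) 0 = 2\<close> \<open>?q 0 = 0\<close> show False by simp
qed

theorem mainTheorem14:
  shows "(\<exists>S T. unitary_mat 4 S \<and> unitary_mat 4 T \<and>
            (\<forall>f. f permutes {..<2::nat} \<longrightarrow>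
               S * ea_min_oracle 2 f * T = std_oracle 2 f))
       \<and> (\<forall>M::nat. M \<ge> 3 \<longrightarrow>
            \<not> (\<exists>S T. unitary_mat (M*M) S \<and> unitary_mat (M*M) T \<and>
                 (\<forall>f. f permutes {..<M} \<longrightarrow>
                    S * ea_min_oracle M f * T = std_oracle M f)))"
proof (intro conjI allI impI notI)
  let ?S = "perm_mat (2 * 2) (swap_index 2)" and ?T = "perm_mat (2 * 2) (swap_index 2 \<circ> std_index 2 id)"
  have "unitary_mat (2 * 2) ?S" "unitary_mat (2 * 2) ?T"
    by (rule unitary_perm_mat, rule bij_swap_index)
      (rule unitary_perm_mat, rule bij_betw_trans[OF bij_std_index bij_swap_index])
  moreover have "?S * ea_min_oracle 2 f * ?T = std_oracle 2 f" if "f permutes {..<2}" for f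
    using permutes_two_translation[OF that] by (rule std_oracle_translation_via_swap)
  ultimately show "\<exists>S T. unitary_mat 4 S \<and> unitary_mat 4 T \<and>
      (\<forall>f. f permutes {..<2::nat} \<longrightarrow> S * ea_min_oracle 2 f * T = std_oracle 2 f)"
    by auto
next
  fix M :: nat
  assume M: "M \<ge> 3" and "\<exists>S T. unitary_mat (M * M) S \<and> unitary_mat (M * M) T \<and>
    (\<forall>f. f permutes {..<M} \<longrightarrow> S * ea_min_oracle M f * T = std_oracle M f)"
  then obtain S T where S: "unitary_mat (M * M) S" and T: "unitary_mat (M * M) T"
    and conv: "\<And>f. f permutes {..<M} \<Longrightarrow> S * ea_min_oracle M f * T = std_oracle M f"
    by blast
  let ?tr = "transpose 0 1 :: nat \<Rightarrow> nat"
  have tr: "?tr permutes {..<M}" using M by (intro permutes_swap_id) auto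
  have "S * T = std_oracle M id"
    using conv[OF permutes_id] S by (auto simp: ea_min_oracle_id unitary_mat_def)
  moreover have "ea_min_oracle M ?tr * ea_min_oracle M ?tr = 1\<^sub>m (M * M)"
    using M by (intro ea_min_oracle_involution) (auto simp: transpose_def)
  ultimately have "std_oracle M ?tr * mat_adjoint (std_oracle M id) * std_oracle M ?tr = std_oracle M id"
    using S T conv[OF tr] unitary_std_oracle
    by (intro unitary_equivalence_involution[where S = S and T = T and A = "ea_min_oracle M ?tr"])
      (auto simp: unitary_mat_def ea_min_oracle_eq_perm_mat)
  with std_oracle_transpose_adjoint_ne[OF M] show False by contradiction
qed

end
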